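(* Let $G=(V,E)$ be a directed graph and $K\subset V$ a set of $|K|=k$ terminals. Then there exists a reachability-preserving minor $H$ of $G$ whose number of non-terminal vertices $|V(H)\setminus K|$ is $O(k^{3})$.
   Context: A $k$-terminal digraph is a digraph $G=(V,E)$ with a designated terminal set $K\subset V$, $|K|=k$. A minor of a digraph $G$ is any digraph obtained from $G$ by a sequence of vertex deletions, edge deletions and edge contractions (contracting a directed edge $(u,v)$ identifies $u$ and $v$ into one vertex, discarding loops), where terminals are never deleted and no contraction identifies two terminals (a vertex obtained by merging a terminal with non-terminals is identified with that terminal). A digraph $H$ with $K\subseteq V(H)$ is a reachability-preserving minor (RPM) of $G$ if $H$ is a minor of $G$ and for all $x,x'\in K$ there is a directed path from $x$ to $x'$ in $H$ if and only if there is one in $G$. The size of $H$ is $|V(H)\setminus K|$. *)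

theory Defs
  imports Main
begin

text \<open>A digraph is a pair (V, E) of a vertex set and an edge set E \<subseteq> V \<times> V.
  Vertices are natural numbers (any finite digraph can be relabelled this way).\<close>

type_synonym digraph = "nat set \<times> (nat \<times> nat) set"

definition wf_digraph :: "digraph \<Rightarrow> bool" where
  "wf_digraph G \<longleftrightarrow> finite (fst G) \<and> snd G \<subseteq> fst G \<times> fst G"

definition contract :: "nat set \<Rightarrow> nat \<Rightarrow> nat \<Rightarrow> digraph \<Rightarrow> digraph" where
  "contract K u v G =
    (let w = (if v \<in> K then v else u); r = (if v \<in> K then u else v);
         f = (\<lambda>x. if x = r then w else x)
     in (fst G - {r}, {(f a, f b) | a b. (a, b) \<in> snd G \<and> f a \<noteq> f b}))"

inductive minor_step :: "nat set \<Rightarrow> digraph \<Rightarrow> digraph \<Rightarrow> bool" for K where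
  del_vertex: "v \<in> fst G \<Longrightarrow> v \<notin> K \<Longrightarrow>
     minor_step K G (fst G - {v}, {e \<in> snd G. fst e \<noteq> v \<and> snd e \<noteq> v})"
| del_edge: "e \<in> snd G \<Longrightarrow> minor_step K G (fst G, snd G - {e})"
| contract_edge: "(u, v) \<in> snd G \<Longrightarrow> u \<noteq> v \<Longrightarrow> \<not> (u \<in> K \<and> v \<in> K) \<Longrightarrow>
     minor_step K G (contract K u v G)"

definition is_minor :: "nat set \<Rightarrow> digraph \<Rightarrow> digraph \<Rightarrow> bool" where
  "is_minor K H G \<longleftrightarrow> (minor_step K)\<^sup>*\<^sup>* G H"

definition reach :: "digraph \<Rightarrow> nat \<Rightarrow> nat \<Rightarrow> bool" where
  "reach G x y \<longleftrightarrow> (x, y) \<in> (snd G)\<^sup>*"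

definition is_RPM :: "nat set \<Rightarrow> digraph \<Rightarrow> digraph \<Rightarrow> bool" where
  "is_RPM K H G \<longleftrightarrow> is_minor K H G \<and> K \<subseteq> fst H \<and>
     (\<forall>x\<in>K. \<forall>x'\<in>K. reach H x x' \<longleftrightarrow> reach G x x')"

definition RPM_size :: "nat set \<Rightarrow> digraph \<Rightarrow> nat" where
  "RPM_size K H = card (fst H - K)"

end

theory Submission
  imports Defs
begin

text \<open>Take an RPM \<open>H\<close> of \<open>G\<close> minimising \<open>|V(H)| + |E(H)|\<close>. Then every edge of \<open>H\<close> is needed
  for some terminal pair, and every non-terminal \<open>v\<close> has two distinct in-neighbours: with none
  it could be deleted, and with exactly one, \<open>a\<close>, the edge \<open>(a,v)\<close> could be contracted.
  Moreover no in-neighbour \<open>a\<close> of \<open>v\<close> is reachable from \<open>v\<close>, since then contracting \<open>(a,v)\<close>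
  would not change reachability either. If \<open>(a,v)\<close> is needed for \<open>s\<^sub>1 \<leadsto> t\<close> and another
  in-edge \<open>(b,v)\<close> is needed for some pair starting at \<open>s\<^sub>2\<close>, then \<open>s\<^sub>2\<close> reaches \<open>v\<close> but not \<open>a\<close>,
  and the triple \<open>(s\<^sub>1, s\<^sub>2, t)\<close> determines \<open>v\<close>. Hence there are at most \<open>k\<^sup>3\<close> non-terminals.\<close>

lemma rtrancl_through_edge:
  assumes "(x, y) \<in> E\<^sup>*" and "(x, y) \<notin> (E - {(a, b)})\<^sup>*"
  shows "(x, a) \<in> E\<^sup>*" and "(b, y) \<in> E\<^sup>*"
proof -
  from assms have "(x, a) \<in> E\<^sup>* \<and> (b, y) \<in> E\<^sup>*"
  proof (induction y rule: rtrancl_induct)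
    case base
    then show ?case by simp
  next
    case (step y z)
    show ?case
    proof (cases "(x, y) \<in> (E - {(a, b)})\<^sup>*")
      case True
      with step have "(y, z) = (a, b)"
        by (metis DiffI rtrancl.rtrancl_into_rtrancl singletonD)
      with step.hyps show ?thesis by auto
    next
      case False
      with step show ?thesis by (meson rtrancl.rtrancl_into_rtrancl)
    qed
  qed
  then show "(x, a) \<in> E\<^sup>*" and "(b, y) \<in> E\<^sup>*" by auto
qed

lemma rtrancl_insert_edge_into_vertex:
  assumes "(x, y) \<in> (insert (v, u) E)\<^sup>*" and "x \<noteq> v"
    and only_u: "\<And>c. (c, v) \<in> E \<Longrightarrow> c = u"
  shows "(x, y) \<in> E\<^sup>*"
  using assms(1)
proof (induction y rule: rtrancl_induct)
  case base
  then show ?case by simp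
next
  case (step y z)
  show ?case
  proof (cases "(y, z) \<in> E")
    case True
    with step.IH show ?thesis by (rule rtrancl.rtrancl_into_rtrancl)
  next
    case False
    with step.hyps have yz: "y = v" "z = u" by auto
    with step.IH \<open>x \<noteq> v\<close> obtain c where "(x, c) \<in> E\<^sup>*" "(c, v) \<in> E"
      by (auto elim: rtranclE)
    with yz only_u show ?thesis by auto
  qed
qed

lemma rtrancl_avoids_vertex_without_in_edges:
  assumes "(x, y) \<in> E\<^sup>*" and "x \<noteq> v" and "\<And>c. (c, v) \<notin> E"
  shows "(x, y) \<in> {e \<in> E. fst e \<noteq> v \<and> snd e \<noteq> v}\<^sup>* \<and> y \<noteq> v"
  using assms(1)
proof (induction y rule: rtrancl_induct)
  case base
  with assms show ?case by simp
next
  case (step y z)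
  with assms(3) have "z \<noteq> v" by blast
  with step have "(y, z) \<in> {e \<in> E. fst e \<noteq> v \<and> snd e \<noteq> v}" by auto
  with step.IH \<open>z \<noteq> v\<close> show ?case by (meson rtrancl.rtrancl_into_rtrancl)
qed

definition merge_edges :: "('a \<Rightarrow> 'a) \<Rightarrow> ('a \<times> 'a) set \<Rightarrow> ('a \<times> 'a) set" where
  "merge_edges f E = {(f a, f b) | a b. (a, b) \<in> E \<and> f a \<noteq> f b}"

lemma contract_nonterminal:
  "v \<notin> K \<Longrightarrow> contract K a v G = (fst G - {v}, merge_edges (\<lambda>x. if x = v then a else x) (snd G))"
  by (simp add: contract_def merge_edges_def)

lemma card_merge_edges_le:
  assumes "finite E"
  shows "card (merge_edges f E) \<le> card E"
proof -
  have "merge_edges f E \<subseteq> (\<lambda>(p, q). (f p, f q)) ` E"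
    by (force simp: merge_edges_def)
  with assms show ?thesis
    by (metis card_image_le card_mono finite_imageI le_trans)
qed

lemma rtrancl_merge_edgesI: "(p, q) \<in> E\<^sup>* \<Longrightarrow> (f p, f q) \<in> (merge_edges f E)\<^sup>*"
proof (induction q rule: rtrancl_induct)
  case base
  then show ?case by simp
next
  case (step y z)
  show ?case
  proof (cases "f y = f z")
    case False
    with step.hyps have "(f y, f z) \<in> merge_edges f E" by (auto simp: merge_edges_def)
    with step.IH show ?thesis by (rule rtrancl.rtrancl_into_rtrancl)
  qed (use step in simp)
qed

lemma rtrancl_merge_edgesD:
  assumes "(f x, f y) \<in> (merge_edges f E)\<^sup>*" and "E \<subseteq> R"
    and merged: "\<And>p q. f p = f q \<Longrightarrow> (p, q) \<in> R\<^sup>*"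
  shows "(x, y) \<in> R\<^sup>*"
proof -
  have "(x, y) \<in> R\<^sup>*" if "(f x, z) \<in> (merge_edges f E)\<^sup>*" and "f y = z" for y z
    using that
  proof (induction z arbitrary: y rule: rtrancl_induct)
    case base
    then show ?case using merged by simp
  next
    case (step z z')
    then obtain a b where ab: "z = f a" "z' = f b" "(a, b) \<in> E"
      by (auto simp: merge_edges_def)
    from step.IH ab(1) have "(x, a) \<in> R\<^sup>*" by blast
    moreover from ab(3) \<open>E \<subseteq> R\<close> have "(a, b) \<in> R" by blast
    moreover from merged step.prems ab(2) have "(b, y) \<in> R\<^sup>*" by simp
    ultimately show ?case by (meson rtrancl.rtrancl_into_rtrancl rtrancl_trans)
  qed
  with assms(1) show ?thesis by blast
qed

lemma rtrancl_contract_into_source: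
  assumes "(a, v) \<in> E" and "x \<noteq> v" and "y \<noteq> v"
    and "(x, y) \<in> (merge_edges (\<lambda>z. if z = v then a else z) E)\<^sup>*"
  shows "(x, y) \<in> (insert (v, a) E)\<^sup>*"
proof (rule rtrancl_merge_edgesD)
  show "((\<lambda>z. if z = v then a else z) x, (\<lambda>z. if z = v then a else z) y)
      \<in> (merge_edges (\<lambda>z. if z = v then a else z) E)\<^sup>*"
    using assms(2-4) by simp
  show "E \<subseteq> insert (v, a) E" by blast
  fix p q
  assume "(if p = v then a else p) = (if q = v then a else q)"
  then have "p = q \<or> (p = v \<and> q = a) \<or> (p = a \<and> q = v)" by (auto split: if_splits)
  with \<open>(a, v) \<in> E\<close> show "(p, q) \<in> (insert (v, a) E)\<^sup>*" by auto
qed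

lemma minor_step_wf_digraph: "minor_step K G H \<Longrightarrow> wf_digraph G \<Longrightarrow> wf_digraph H"
  by (induction rule: minor_step.induct) (auto simp: wf_digraph_def contract_def Let_def)

definition digraph_size :: "digraph \<Rightarrow> nat" where
  "digraph_size H = card (fst H) + card (snd H)"

definition charges :: "('a \<times> 'a) set \<Rightarrow> 'a \<Rightarrow> 'a \<Rightarrow> 'a \<Rightarrow> 'a \<Rightarrow> bool" where
  "charges E v s\<^sub>1 s\<^sub>2 t \<longleftrightarrow> (\<exists>a. (a, v) \<in> E \<and> (s\<^sub>1, t) \<in> E\<^sup>* \<and> (s\<^sub>1, t) \<notin> (E - {(a, v)})\<^sup>* \<and>
     (s\<^sub>2, v) \<in> E\<^sup>* \<and> (s\<^sub>2, a) \<notin> E\<^sup>*)"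

text \<open>If \<open>(a,v)\<close> and \<open>(a',v')\<close> are both needed for \<open>s\<^sub>1 \<leadsto> t\<close>, the path through \<open>(a,v)\<close>
  uses \<open>(a',v')\<close> before or after it, i.e.\ \<open>v' \<leadsto> a\<close> or \<open>v \<leadsto> a'\<close>; both are ruled out by \<open>s\<^sub>2\<close>.\<close>

lemma charges_unique:
  assumes "charges E v s\<^sub>1 s\<^sub>2 t" and "charges E v' s\<^sub>1 s\<^sub>2 t"
  shows "v = v'"
proof (rule ccontr)
  assume "v \<noteq> v'"
  from assms obtain a a' where
    a: "(a, v) \<in> E" "(s\<^sub>1, t) \<in> E\<^sup>*" "(s\<^sub>1, t) \<notin> (E - {(a, v)})\<^sup>*" "(s\<^sub>2, v) \<in> E\<^sup>*" "(s\<^sub>2, a) \<notin> E\<^sup>*" and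
    a': "(s\<^sub>1, t) \<notin> (E - {(a', v')})\<^sup>*" "(s\<^sub>2, v') \<in> E\<^sup>*" "(s\<^sub>2, a') \<notin> E\<^sup>*"
    unfolding charges_def by blast
  have s\<^sub>1a: "(s\<^sub>1, a) \<in> E\<^sup>*" and vt: "(v, t) \<in> E\<^sup>*"
    using rtrancl_through_edge[OF a(2,3)] by auto
  have "(s\<^sub>1, a) \<in> (E - {(a', v')})\<^sup>*"
  proof (rule ccontr)
    assume "(s\<^sub>1, a) \<notin> (E - {(a', v')})\<^sup>*"
    with s\<^sub>1a have "(v', a) \<in> E\<^sup>*" by (rule rtrancl_through_edge)
    with a'(2) a(5) show False by (meson rtrancl_trans)
  qed
  moreover have "(v, t) \<in> (E - {(a', v')})\<^sup>*"
  proof (rule ccontr)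
    assume "(v, t) \<notin> (E - {(a', v')})\<^sup>*"
    with vt have "(v, a') \<in> E\<^sup>*" by (rule rtrancl_through_edge)
    with a(4) a'(3) show False by (meson rtrancl_trans)
  qed
  moreover from a(1) \<open>v \<noteq> v'\<close> have "(a, v) \<in> E - {(a', v')}" by auto
  ultimately have "(s\<^sub>1, t) \<in> (E - {(a', v')})\<^sup>*"
    by (meson rtrancl.rtrancl_into_rtrancl rtrancl_trans)
  with a'(1) show False ..
qed

locale minimal_RPM =
  fixes K :: "nat set" and H :: digraph
  assumes wf: "wf_digraph H" and terminals: "K \<subseteq> fst H"
    and minimal: "\<And>H'. minor_step K H H' \<Longrightarrow> K \<subseteq> fst H' \<Longrightarrow>
      (\<forall>x\<in>K. \<forall>y\<in>K. reach H' x y \<longleftrightarrow> reach H x y) \<Longrightarrow> digraph_size H \<le> digraph_size H'"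
begin

lemma finite_vertices: "finite (fst H)"
  using wf by (simp add: wf_digraph_def)

lemma edges_subset: "snd H \<subseteq> fst H \<times> fst H"
  using wf by (simp add: wf_digraph_def)

lemma finite_edges: "finite (snd H)"
  using finite_vertices edges_subset finite_subset by blast

lemma finite_terminals: "finite K"
  using terminals finite_vertices finite_subset by blast

lemma edge_needed:
  assumes e: "e \<in> snd H"
  shows "\<exists>s\<in>K. \<exists>t\<in>K. (s, t) \<in> (snd H)\<^sup>* \<and> (s, t) \<notin> (snd H - {e})\<^sup>*"
proof (rule ccontr)
  assume not_needed: "\<not> ?thesis"
  let ?H' = "(fst H, snd H - {e})"
  have "digraph_size H \<le> digraph_size ?H'"
  proof (rule minimal)
    show "minor_step K H ?H'" using minor_step.del_edge[OF e] by simp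
    show "K \<subseteq> fst ?H'" using terminals by simp
    show "\<forall>x\<in>K. \<forall>y\<in>K. reach ?H' x y \<longleftrightarrow> reach H x y"
      using not_needed unfolding reach_def by (auto intro: rtrancl_mono[THEN subsetD, rotated])
  qed
  moreover have "digraph_size ?H' < digraph_size H"
    using card_Diff1_less[OF finite_edges e] by (simp add: digraph_size_def)
  ultimately show False by simp
qed

lemma no_loop: "(v, v) \<notin> snd H"
proof
  assume "(v, v) \<in> snd H"
  then obtain s t where "(s, t) \<in> (snd H)\<^sup>*" "(s, t) \<notin> (snd H - {(v, v)})\<^sup>*"
    using edge_needed by blast
  moreover have "(snd H - Id)\<^sup>* \<subseteq> (snd H - {(v, v)})\<^sup>*" by (rule rtrancl_mono) auto
  ultimately show False by (simp add: rtrancl_r_diff_Id subset_iff)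
qed

lemma contraction_changes_reach:
  assumes av: "(a, v) \<in> snd H" and "v \<notin> K"
  shows "\<exists>x\<in>K. \<exists>y\<in>K. (x, y) \<in> (insert (v, a) (snd H))\<^sup>* \<and> (x, y) \<notin> (snd H)\<^sup>*"
proof (rule ccontr)
  assume unchanged: "\<not> ?thesis"
  define f where "f = (\<lambda>x::nat. if x = v then a else x)"
  let ?H' = "(fst H - {v}, merge_edges f (snd H))"
  have "a \<noteq> v" using av no_loop by blast
  have "digraph_size H \<le> digraph_size ?H'"
  proof (rule minimal)
    show "minor_step K H ?H'"
      using minor_step.contract_edge[where K = K, OF av \<open>a \<noteq> v\<close>] \<open>v \<notin> K\<close>
      by (simp add: contract_nonterminal f_def)
    show "K \<subseteq> fst ?H'" using terminals \<open>v \<notin> K\<close> by auto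
    show "\<forall>x\<in>K. \<forall>y\<in>K. reach ?H' x y \<longleftrightarrow> reach H x y"
    proof (intro ballI)
      fix x y assume "x \<in> K" "y \<in> K"
      with \<open>v \<notin> K\<close> have "x \<noteq> v" "y \<noteq> v" by auto
      then have "f x = x" "f y = y" by (simp_all add: f_def)
      show "reach ?H' x y \<longleftrightarrow> reach H x y"
        unfolding reach_def snd_conv
      proof
        assume "(x, y) \<in> (merge_edges f (snd H))\<^sup>*"
        with av \<open>x \<noteq> v\<close> \<open>y \<noteq> v\<close> have "(x, y) \<in> (insert (v, a) (snd H))\<^sup>*"
          unfolding f_def by (rule rtrancl_contract_into_source)
        with unchanged \<open>x \<in> K\<close> \<open>y \<in> K\<close> show "(x, y) \<in> (snd H)\<^sup>*" by blast
      next
        assume "(x, y) \<in> (snd H)\<^sup>*"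
        then show "(x, y) \<in> (merge_edges f (snd H))\<^sup>*"
          using rtrancl_merge_edgesI[of x y "snd H" f] \<open>f x = x\<close> \<open>f y = y\<close> by simp
      qed
    qed
  qed
  moreover have "digraph_size ?H' < digraph_size H"
  proof -
    have "v \<in> fst H" using av edges_subset by auto
    then have "card (fst H - {v}) < card (fst H)" by (rule card_Diff1_less[OF finite_vertices])
    moreover have "card (merge_edges f (snd H)) \<le> card (snd H)"
      by (rule card_merge_edges_le[OF finite_edges])
    ultimately show ?thesis by (simp add: digraph_size_def)
  qed
  ultimately show False by simp
qed

lemma in_neighbour_unreachable:
  assumes "(a, v) \<in> snd H" and "v \<notin> K"
  shows "(v, a) \<notin> (snd H)\<^sup>*"
proof
  assume "(v, a) \<in> (snd H)\<^sup>*"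
  then have "insert (v, a) (snd H) \<subseteq> (snd H)\<^sup>*" by auto
  then have "(insert (v, a) (snd H))\<^sup>* \<subseteq> (snd H)\<^sup>*" by (rule rtrancl_subset_rtrancl)
  with contraction_changes_reach[OF assms] show False by blast
qed

lemma has_in_neighbour:
  assumes vV: "v \<in> fst H" and vK: "v \<notin> K"
  shows "\<exists>a. (a, v) \<in> snd H"
proof (rule ccontr)
  assume no_in_edge: "\<not> ?thesis"
  let ?E' = "{e \<in> snd H. fst e \<noteq> v \<and> snd e \<noteq> v}"
  let ?H' = "(fst H - {v}, ?E')"
  have "digraph_size H \<le> digraph_size ?H'"
  proof (rule minimal)
    show "minor_step K H ?H'" using minor_step.del_vertex[OF vV vK] by simp
    show "K \<subseteq> fst ?H'" using terminals vK by auto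
    show "\<forall>x\<in>K. \<forall>y\<in>K. reach ?H' x y \<longleftrightarrow> reach H x y"
    proof (intro ballI)
      fix x y assume "x \<in> K"
      with vK have "x \<noteq> v" by blast
      have "?E'\<^sup>* \<subseteq> (snd H)\<^sup>*" by (rule rtrancl_mono) auto
      with rtrancl_avoids_vertex_without_in_edges[OF _ \<open>x \<noteq> v\<close>] no_in_edge
      show "reach ?H' x y \<longleftrightarrow> reach H x y" unfolding reach_def by auto
    qed
  qed
  moreover have "digraph_size ?H' < digraph_size H"
  proof -
    have "card (fst H - {v}) < card (fst H)" by (rule card_Diff1_less[OF finite_vertices vV])
    moreover have "card ?E' \<le> card (snd H)" using finite_edges by (intro card_mono) auto
    ultimately show ?thesis by (simp add: digraph_size_def)
  qed
  ultimately show False by simp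
qed

lemma two_in_neighbours:
  assumes "v \<in> fst H" and "v \<notin> K"
  shows "\<exists>a b. a \<noteq> b \<and> (a, v) \<in> snd H \<and> (b, v) \<in> snd H"
proof (rule ccontr)
  assume "\<not> ?thesis"
  moreover obtain a where av: "(a, v) \<in> snd H" using has_in_neighbour[OF assms] by blast
  ultimately have only_a: "\<And>c. (c, v) \<in> snd H \<Longrightarrow> c = a" by blast
  obtain x y where "x \<in> K" "(x, y) \<in> (insert (v, a) (snd H))\<^sup>*" "(x, y) \<notin> (snd H)\<^sup>*"
    using contraction_changes_reach[OF av \<open>v \<notin> K\<close>] by blast
  moreover from \<open>x \<in> K\<close> \<open>v \<notin> K\<close> have "x \<noteq> v" by blast
  ultimately show False using rtrancl_insert_edge_into_vertex[OF _ _ only_a] by blast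
qed

lemma nonterminal_charged:
  assumes "v \<in> fst H" and "v \<notin> K"
  shows "\<exists>s\<^sub>1\<in>K. \<exists>s\<^sub>2\<in>K. \<exists>t\<in>K. charges (snd H) v s\<^sub>1 s\<^sub>2 t"
proof -
  obtain a b where "a \<noteq> b" and av: "(a, v) \<in> snd H" and bv: "(b, v) \<in> snd H"
    using two_in_neighbours[OF assms] by blast
  obtain s\<^sub>1 t where s\<^sub>1: "s\<^sub>1 \<in> K" "t \<in> K" "(s\<^sub>1, t) \<in> (snd H)\<^sup>*" "(s\<^sub>1, t) \<notin> (snd H - {(a, v)})\<^sup>*"
    using edge_needed[OF av] by blast
  obtain s\<^sub>2 t\<^sub>2 where s\<^sub>2: "s\<^sub>2 \<in> K" "(s\<^sub>2, t\<^sub>2) \<in> (snd H)\<^sup>*" "(s\<^sub>2, t\<^sub>2) \<notin> (snd H - {(b, v)})\<^sup>*"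
    using edge_needed[OF bv] by blast
  have s\<^sub>2b: "(s\<^sub>2, b) \<in> (snd H)\<^sup>*" and vt\<^sub>2: "(v, t\<^sub>2) \<in> (snd H)\<^sup>*"
    using rtrancl_through_edge[OF s\<^sub>2(2,3)] by auto
  have "(s\<^sub>2, a) \<notin> (snd H)\<^sup>*"
  proof
    assume s\<^sub>2a: "(s\<^sub>2, a) \<in> (snd H)\<^sup>*"
    have "(s\<^sub>2, a) \<in> (snd H - {(b, v)})\<^sup>*"
      using rtrancl_through_edge(2)[OF s\<^sub>2a] in_neighbour_unreachable[OF av \<open>v \<notin> K\<close>] by blast
    moreover have "(v, t\<^sub>2) \<in> (snd H - {(b, v)})\<^sup>*"
      using rtrancl_through_edge(1)[OF vt\<^sub>2] in_neighbour_unreachable[OF bv \<open>v \<notin> K\<close>] by blast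
    moreover from av \<open>a \<noteq> b\<close> have "(a, v) \<in> snd H - {(b, v)}" by auto
    ultimately have "(s\<^sub>2, t\<^sub>2) \<in> (snd H - {(b, v)})\<^sup>*"
      by (meson rtrancl.rtrancl_into_rtrancl rtrancl_trans)
    with s\<^sub>2(3) show False ..
  qed
  moreover have "(s\<^sub>2, v) \<in> (snd H)\<^sup>*" using s\<^sub>2b bv by (rule rtrancl.rtrancl_into_rtrancl)
  ultimately have "charges (snd H) v s\<^sub>1 s\<^sub>2 t"
    using av s\<^sub>1(3,4) unfolding charges_def by blast
  with s\<^sub>1(1,2) s\<^sub>2(1) show ?thesis by blast
qed

lemma card_nonterminals_le: "card (fst H - K) \<le> card K ^ 3"
proof -
  have "\<forall>v\<in>fst H - K. \<exists>tr. tr \<in> K \<times> K \<times> K \<and>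
      charges (snd H) v (fst tr) (fst (snd tr)) (snd (snd tr))"
    using nonterminal_charged by fastforce
  then obtain g where g: "\<forall>v\<in>fst H - K. g v \<in> K \<times> K \<times> K \<and>
      charges (snd H) v (fst (g v)) (fst (snd (g v))) (snd (snd (g v)))"
    by (rule bchoice[elim_format]) blast
  have "inj_on g (fst H - K)"
    by (rule inj_onI) (use g charges_unique in metis)
  moreover have "g ` (fst H - K) \<subseteq> K \<times> K \<times> K" using g by blast
  ultimately have "card (fst H - K) \<le> card (K \<times> K \<times> K)"
    using card_inj_on_le finite_terminals by blast
  also have "\<dots> = card K ^ 3" by (simp add: card_cartesian_product power3_eq_cube)
  finally show ?thesis .
qed

end

lemma ex_minimal_RPM:
  assumes "wf_digraph G" and "K \<subseteq> fst G"
  shows "\<exists>H. is_RPM K H G \<and> minimal_RPM K H"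
proof -
  let ?P = "\<lambda>H. is_RPM K H G \<and> wf_digraph H"
  have "?P G" using assms by (simp add: is_RPM_def is_minor_def)
  then obtain H where PH: "?P H" and least: "\<And>H'. ?P H' \<Longrightarrow> digraph_size H \<le> digraph_size H'"
    using ex_has_least_nat[of ?P G digraph_size] by blast
  have "minimal_RPM K H"
  proof
    show "wf_digraph H" "K \<subseteq> fst H" using PH by (simp_all add: is_RPM_def)
    fix H' assume step: "minor_step K H H'" and "K \<subseteq> fst H'"
      and "\<forall>x\<in>K. \<forall>y\<in>K. reach H' x y \<longleftrightarrow> reach H x y"
    moreover have "is_minor K H' G"
      using PH step unfolding is_RPM_def is_minor_def by (meson rtranclp.rtrancl_into_rtrancl)
    moreover have "wf_digraph H'" using minor_step_wf_digraph[OF step] PH by blast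
    ultimately have "?P H'" using PH by (simp add: is_RPM_def)
    then show "digraph_size H \<le> digraph_size H'" by (rule least)
  qed
  with PH show ?thesis by blast
qed

theorem theorem1p1:
  "\<exists>c::nat. \<forall>(G::digraph) (K::nat set).
     wf_digraph G \<and> K \<subseteq> fst G \<longrightarrow>
     (\<exists>H. is_RPM K H G \<and> RPM_size K H \<le> c * (card K) ^ 3)"
proof (intro exI[of _ 1] allI impI)
  fix G :: digraph and K :: "nat set"
  assume "wf_digraph G \<and> K \<subseteq> fst G"
  then obtain H where "is_RPM K H G" and "minimal_RPM K H"
    using ex_minimal_RPM by blast
  moreover from \<open>minimal_RPM K H\<close> have "RPM_size K H \<le> card K ^ 3"
    unfolding RPM_size_def by (rule minimal_RPM.card_nonterminals_le)
  ultimately show "\<exists>H. is_RPM K H G \<and> RPM_size K H \<le> 1 * card K ^ 3" by (intro exI[of _ H]) simp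
qed

end
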